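(* Let $G$ be a graph with a 1-planar drawing $D$. If $G$ is 4-connected, then $D$ is nice.
   Context: All drawings are good (no edge crosses itself, two edges cross at most once, adjacent edges do not cross). A drawing is 1-planar if every edge is crossed at most once. If edges $ab$ and $cd$ cross in $D$, the associated edges of this crossing are the edges of $G[\{a,b,c,d\}]$ other than $ab$ and $cd$. A 1-planar drawing $D$ is nice if for every pair of crossing edges in $D$, all of their associated edges are uncrossed in $D$. A graph is 4-connected if it has no vertex-cut of fewer than 4 vertices (with $\kappa(K_n)=n-1$). *)

theory Defs
  imports "HOL-Analysis.Analysis"
begin

definition simple_graph :: "'a set \<Rightarrow> 'a set set \<Rightarrow> bool" where
  "simple_graph V E \<longleftrightarrow> finite V \<and> (\<forall>e\<in>E. \<exists>u v. e = {u, v} \<and> u \<in> V \<and> v \<in> V \<and> u \<noteq> v)"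

definition connected_on :: "'a set \<Rightarrow> 'a set set \<Rightarrow> bool" where
  "connected_on W E \<longleftrightarrow>
     (\<forall>u\<in>W. \<forall>v\<in>W. (u, v) \<in> {(x, y). x \<in> W \<and> y \<in> W \<and> {x, y} \<in> E}\<^sup>*)"

text \<open>k-connectedness: more than k vertices and no vertex cut of fewer than k vertices
  (so that the connectivity of K_n is n-1).\<close>
definition k_connected :: "nat \<Rightarrow> 'a set \<Rightarrow> 'a set set \<Rightarrow> bool" where
  "k_connected k V E \<longleftrightarrow> card V > k \<and>
     (\<forall>S. S \<subseteq> V \<and> card S < k \<longrightarrow> connected_on (V - S) E)"

definition proper_crossing_at :: "(real \<Rightarrow> complex) \<Rightarrow> (real \<Rightarrow> complex) \<Rightarrow> complex \<Rightarrow> bool" where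
  "proper_crossing_at g1 g2 x \<longleftrightarrow>
     (\<exists>U h k. open U \<and> x \<in> U \<and> homeomorphism U (ball 0 1) h k \<and> h x = 0 \<and>
        h ` (path_image g1 \<inter> U) = {z \<in> ball 0 1. Im z = 0} \<and>
        h ` (path_image g2 \<inter> U) = {z \<in> ball 0 1. Re z = 0})"

definition crossings ::
  "'a set \<Rightarrow> ('a \<Rightarrow> complex) \<Rightarrow> ('a set \<Rightarrow> real \<Rightarrow> complex) \<Rightarrow> 'a set \<Rightarrow> 'a set \<Rightarrow> complex set" where
  "crossings V pos curve e f = path_image (curve e) \<inter> path_image (curve f) - pos ` V"

definition cross ::
  "'a set \<Rightarrow> ('a \<Rightarrow> complex) \<Rightarrow> ('a set \<Rightarrow> real \<Rightarrow> complex) \<Rightarrow> 'a set \<Rightarrow> 'a set \<Rightarrow> bool" where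
  "cross V pos curve e f \<longleftrightarrow> e \<noteq> f \<and> crossings V pos curve e f \<noteq> {}"

definition drawing ::
  "'a set \<Rightarrow> 'a set set \<Rightarrow> ('a \<Rightarrow> complex) \<Rightarrow> ('a set \<Rightarrow> real \<Rightarrow> complex) \<Rightarrow> bool" where
  "drawing V E pos curve \<longleftrightarrow>
     inj_on pos V \<and>
     (\<forall>e\<in>E. arc (curve e) \<and>
        {pathstart (curve e), pathfinish (curve e)} = pos ` e \<and>
        path_image (curve e) \<inter> pos ` V \<subseteq> pos ` e \<and>
        pos ` V \<inter> (curve e) ` {0<..<1} = {}) \<and>
     (\<forall>e\<in>E. \<forall>f\<in>E. e \<noteq> f \<longrightarrow>
        (\<forall>x \<in> crossings V pos curve e f. proper_crossing_at (curve e) (curve f) x))"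

definition good_drawing ::
  "'a set \<Rightarrow> 'a set set \<Rightarrow> ('a \<Rightarrow> complex) \<Rightarrow> ('a set \<Rightarrow> real \<Rightarrow> complex) \<Rightarrow> bool" where
  "good_drawing V E pos curve \<longleftrightarrow> drawing V E pos curve \<and>
     (\<forall>e\<in>E. \<forall>f\<in>E. e \<noteq> f \<longrightarrow>
        finite (crossings V pos curve e f) \<and> card (crossings V pos curve e f) \<le> 1 \<and>
        (e \<inter> f \<noteq> {} \<longrightarrow> crossings V pos curve e f = {}))"

text \<open>1-planar: every edge is crossed at most once.  In a good drawing two edges cross at
  most once, so this says at most one other edge crosses it.\<close>
definition one_planar_drawing ::
  "'a set \<Rightarrow> 'a set set \<Rightarrow> ('a \<Rightarrow> complex) \<Rightarrow> ('a set \<Rightarrow> real \<Rightarrow> complex) \<Rightarrow> bool" where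
  "one_planar_drawing V E pos curve \<longleftrightarrow> good_drawing V E pos curve \<and>
     (\<forall>e\<in>E. card {f\<in>E. cross V pos curve e f} \<le> 1)"

definition nice_drawing ::
  "'a set \<Rightarrow> 'a set set \<Rightarrow> ('a \<Rightarrow> complex) \<Rightarrow> ('a set \<Rightarrow> real \<Rightarrow> complex) \<Rightarrow> bool" where
  "nice_drawing V E pos curve \<longleftrightarrow> one_planar_drawing V E pos curve \<and>
     (\<forall>e\<in>E. \<forall>f\<in>E. cross V pos curve e f \<longrightarrow>
        (\<forall>g\<in>E. g \<subseteq> e \<union> f \<and> g \<noteq> e \<and> g \<noteq> f \<longrightarrow>
           (\<forall>h\<in>E. \<not> cross V pos curve g h)))"

end

theory Submission
  imports Defs
begin

(* Suppose ab and cd cross at x while the associated edge ac is crossed by an edge q = uv.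
   The part a-x of ab, the part x-c of cd and the edge ac form a Jordan curve T.  Since every
   edge is crossed at most once, an edge avoiding a and c can meet T only in a crossing with ac,
   so q is the only such edge meeting T, and it crosses T exactly once and properly: u and v
   lie on different sides of T.  The remaining parts x-b and x-d of ab and cd leave the proper
   crossing x through adjacent quadrants, so b and d lie on the same side.  Hence one endpoint
   w of q is separated from both b and d, and removing a, c and the other endpoint of q
   disconnects w from b or d, contradicting 4-connectivity. *)

section \<open>Arcs crossing properly in the plane\<close>

lemma continuous_inj_sign_change:
  fixes f :: "real \<Rightarrow> real"
  assumes "continuous_on {a..b} f" "inj_on f {a..b}" "t \<in> {a<..<b}" "f t = 0"
  shows "f a * f b < 0"
proof -
  have "f ` {a..b} = closed_segment (f a) (f b)"
    using continuous_injective_image_segment_1[of a b f] assms by (simp add: closed_segment_eq_real_ivl)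
  then have "0 \<in> closed_segment (f a) (f b)"
    using assms(3,4) by (metis greaterThanLessThan_iff atLeastAtMost_iff image_eqI less_imp_le)
  moreover have "f a \<noteq> 0" "f b \<noteq> 0"
    using inj_onD[OF assms(2), of a t] inj_onD[OF assms(2), of b t] assms(3,4) by auto
  ultimately show ?thesis
    by (auto simp: closed_segment_eq_real_ivl mult_less_0_iff split: if_splits)
qed

lemma path_near_in_open:
  fixes p :: "real \<Rightarrow> 'a::metric_space"
  assumes "path p" "t0 \<in> {0..1}" "open S" "p t0 \<in> S"
  obtains e where "e > 0" "\<And>t. t \<in> {0..1} \<Longrightarrow> \<bar>t - t0\<bar> < e \<Longrightarrow> p t \<in> S"
proof -
  obtain d where "d > 0" "ball (p t0) d \<subseteq> S"
    using assms(3,4) open_contains_ball_eq by blast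
  moreover obtain e where "e > 0" "\<forall>t\<in>{0..1}. dist t t0 < e \<longrightarrow> dist (p t) (p t0) < d"
    using assms(1,2) \<open>d > 0\<close> unfolding path_def continuous_on_iff by blast
  ultimately show thesis
    using that[of e] by (auto simp: dist_real_def dist_commute subset_iff)
qed

lemma arc_eq_iff:
  assumes "arc g" "s \<in> {0..1}" "t \<in> {0..1}"
  shows "g s = g t \<longleftrightarrow> s = t"
  using assms inj_onD[OF arc_imp_inj_on] by blast

lemma connected_path_image_interval:
  assumes "path g" "{s..t} \<subseteq> {0..1}"
  shows "connected (g ` {s..t})"
  using assms unfolding path_def by (metis connected_Icc connected_continuous_image continuous_on_subset)

lemma connected_component_path_piece:
  assumes "path p" "{s..t} \<subseteq> {0..1}" "s \<le> t" "p ` {s..t} \<subseteq> A"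
  shows "connected_component A (p s) (p t)"
  using connected_componentI[OF connected_path_image_interval[OF assms(1,2)] assms(4)] assms(3) by auto

lemma arc_continues_in_open:
  fixes p :: "real \<Rightarrow> 'a::metric_space"
  assumes "arc p" "s0 \<in> {0..<1}" "open U" "p s0 \<in> U"
  obtains s where "s \<in> {s0<..1}" "p s \<in> U" "p s \<noteq> p s0"
proof -
  obtain e where "e > 0" and e: "\<And>t. t \<in> {0..1} \<Longrightarrow> \<bar>t - s0\<bar> < e \<Longrightarrow> p t \<in> U"
    using path_near_in_open[OF arc_imp_path[OF assms(1)], of s0 U] assms(2-4) by auto
  define s where "s = min (s0 + e/2) 1"
  have "s \<in> {s0<..1}"
    using \<open>e > 0\<close> assms(2) by (auto simp: s_def)
  moreover have "p s \<in> U"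
    using \<open>s \<in> {s0<..1}\<close> assms(2) \<open>e > 0\<close> by (intro e) (auto simp: s_def)
  moreover have "p s \<noteq> p s0"
    using arc_eq_iff[OF assms(1)] \<open>s \<in> {s0<..1}\<close> assms(2) by auto
  ultimately show thesis
    by (rule that)
qed

lemma arc_interior_pointE:
  assumes "x \<in> path_image p" "x \<noteq> pathstart p" "x \<noteq> pathfinish p"
  obtains s where "s \<in> {0<..<1}" "p s = x"
proof -
  obtain s where "s \<in> {0..1}" "p s = x"
    using assms(1) by (auto simp: path_image_def)
  moreover have "s \<noteq> 0" "s \<noteq> 1"
    using assms(2,3) \<open>p s = x\<close> by (auto simp: pathstart_def pathfinish_def)
  ultimately have "s \<in> {0<..<1}"
    by auto
  then show thesis
    using that \<open>p s = x\<close> by blast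
qed

lemma proper_crossing_at_cong:
  "path_image p = path_image p' \<Longrightarrow> path_image q = path_image q' \<Longrightarrow>
    proper_crossing_at p q x \<longleftrightarrow> proper_crossing_at p' q' x"
  unfolding proper_crossing_at_def by simp

lemma proper_crossing_chart_within:
  fixes g1 g2 :: "real \<Rightarrow> complex"
  assumes "proper_crossing_at g1 g2 x" "open N" "x \<in> N"
  obtains U h k r where "open U" "x \<in> U" "U \<subseteq> N" "r > 0" "homeomorphism U (ball 0 r) h k"
    "h x = 0" "h ` (path_image g1 \<inter> U) = {z \<in> ball 0 r. Im z = 0}"
    "h ` (path_image g2 \<inter> U) = {z \<in> ball 0 r. Re z = 0}"
proof -
  obtain U0 h k where U0: "open U0" "x \<in> U0" and hom: "homeomorphism U0 (ball 0 1) h k"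
    and hx: "h x = 0"
    and h1: "h ` (path_image g1 \<inter> U0) = {z \<in> ball 0 1. Im z = 0}"
    and h2: "h ` (path_image g2 \<inter> U0) = {z \<in> ball 0 1. Re z = 0}"
    using assms(1) unfolding proper_crossing_at_def by blast
  have "open (ball (0::complex) 1 \<inter> k -` (U0 \<inter> N))"
    using continuous_open_preimage[OF homeomorphism_cont2[OF hom]] U0 assms(2) by blast
  moreover have "0 \<in> ball 0 1 \<inter> k -` (U0 \<inter> N)"
    using homeomorphism_apply1[OF hom U0(2)] hx U0 assms(3) by auto
  ultimately obtain r where r: "r > 0" "ball 0 r \<subseteq> ball 0 1 \<inter> k -` (U0 \<inter> N)"
    using open_contains_ball_eq by blast
  define U where "U = U0 \<inter> h -` ball 0 r"
  have "h ` U = ball 0 r"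
  proof
    show "ball 0 r \<subseteq> h ` U"
    proof
      fix w :: complex assume "w \<in> ball 0 r"
      then have "k w \<in> U0" "h (k w) = w"
        using r homeomorphism_apply2[OF hom] by auto
      then show "w \<in> h ` U"
        using \<open>w \<in> ball 0 r\<close> unfolding U_def by (metis IntI image_eqI vimageI)
    qed
  qed (auto simp: U_def)
  moreover have "U \<subseteq> U0"
    by (simp add: U_def)
  ultimately have "homeomorphism U (ball 0 r) h k"
    using homeomorphism_of_subsets[OF hom _ order_refl] by blast
  moreover have "open U"
    unfolding U_def by (rule continuous_open_preimage[OF homeomorphism_cont1[OF hom] U0(1)]) simp
  moreover have "U \<subseteq> N"
    using r homeomorphism_apply1[OF hom] by (force simp: U_def)
  moreover have "h ` (A \<inter> U) = {z \<in> ball 0 r. P z}" if "h ` (A \<inter> U0) = {z \<in> ball 0 1. P z}" for A P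
  proof -
    have "h ` (A \<inter> U) = h ` (A \<inter> U0) \<inter> ball 0 r"
      by (auto simp: U_def)
    then show ?thesis
      using that r(2) by blast
  qed
  ultimately show thesis
    using that[of U r h k] h1 h2 r(1) U0(2) hx by (simp add: U_def)
qed

lemma chart_open_segment_in_quadrants:
  fixes z1 z2 :: complex
  assumes hom: "homeomorphism U (ball 0 r) h k"
    and h1: "h ` (path_image g1 \<inter> U) = {z \<in> ball 0 r. Im z = 0}"
    and h2: "h ` (path_image g2 \<inter> U) = {z \<in> ball 0 r. Re z = 0}"
    and z: "z1 \<in> ball 0 r" "z2 \<in> ball 0 r" "Im z1 = 0" "Re z1 \<noteq> 0" "Re z2 = 0" "Im z2 \<noteq> 0"
  shows "k ` open_segment z1 z2 \<subseteq> U - (path_image g1 \<union> path_image g2)"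
proof
  fix z assume "z \<in> k ` open_segment z1 z2"
  then obtain w where w: "w \<in> open_segment z1 z2" "z = k w"
    by blast
  then obtain u where u: "w = (1 - u) *\<^sub>R z1 + u *\<^sub>R z2" "0 < u" "u < 1"
    by (auto simp: in_segment(2))
  have "w \<in> ball 0 r"
    using w(1) closed_segment_subset[OF z(1,2) convex_ball] segment_open_subset_closed by blast
  then have "z \<in> U" "h z = w"
    using w(2) homeomorphism_image2[OF hom] homeomorphism_apply2[OF hom] by auto
  moreover have "Re w \<noteq> 0" "Im w \<noteq> 0"
    using u z(3-6) by auto
  ultimately have "h z \<notin> h ` (path_image g1 \<inter> U)" "h z \<notin> h ` (path_image g2 \<inter> U)"
    using h1 h2 by auto
  then show "z \<in> U - (path_image g1 \<union> path_image g2)"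
    using \<open>z \<in> U\<close> by blast
qed

lemma chart_axes_points_connected:
  fixes g1 g2 :: "real \<Rightarrow> complex"
  assumes hom: "homeomorphism U (ball 0 r) h k" and "x \<in> U" "h x = 0"
    and h1: "h ` (path_image g1 \<inter> U) = {z \<in> ball 0 r. Im z = 0}"
    and h2: "h ` (path_image g2 \<inter> U) = {z \<in> ball 0 r. Re z = 0}"
    and p: "p1 \<in> path_image g1 \<inter> U" "p2 \<in> path_image g2 \<inter> U" "p1 \<noteq> x" "p2 \<noteq> x"
    and C: "C \<inter> U \<subseteq> path_image g1 \<union> path_image g2" "p1 \<notin> C" "p2 \<notin> C"
  shows "connected_component (- C) p1 p2"
proof -
  define z1 z2 where "z1 = h p1" and "z2 = h p2"
  have "z1 \<noteq> 0" "z2 \<noteq> 0"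
    using p homeomorphism_apply1[OF hom] assms(2,3) unfolding z1_def z2_def by (metis IntD2)+
  then have z: "z1 \<in> ball 0 r" "z2 \<in> ball 0 r" "Im z1 = 0" "Re z1 \<noteq> 0" "Re z2 = 0" "Im z2 \<noteq> 0"
    using h1 h2 p(1,2) unfolding z1_def z2_def by (auto simp: complex_eq_iff)
  have "k z1 = p1" "k z2 = p2"
    using homeomorphism_apply1[OF hom] p(1,2) by (auto simp: z1_def z2_def)
  moreover have "k ` open_segment z1 z2 \<subseteq> - C"
    using chart_open_segment_in_quadrants[OF hom h1 h2 z] C(1) by blast
  ultimately have "k ` closed_segment z1 z2 \<subseteq> - C"
    using C(2,3) by (auto simp: closed_segment_eq_open)
  moreover have "p1 \<in> k ` closed_segment z1 z2" "p2 \<in> k ` closed_segment z1 z2"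
    using \<open>k z1 = p1\<close> \<open>k z2 = p2\<close> by (metis ends_in_segment image_eqI)+
  ultimately show ?thesis
    using closed_segment_subset[OF z(1,2) convex_ball]
    by (intro connected_componentI[of "k ` closed_segment z1 z2"] connected_continuous_image
        continuous_on_subset[OF homeomorphism_cont2[OF hom]]) auto
qed


lemma proper_crossing_tails_connected:
  fixes \<alpha> \<gamma> :: "real \<Rightarrow> complex"
  assumes arcs: "arc \<alpha>" "arc \<gamma>" and pc: "proper_crossing_at \<alpha> \<gamma> x"
    and s0: "s0 \<in> {0..<1}" "\<alpha> s0 = x" and t0: "t0 \<in> {0..<1}" "\<gamma> t0 = x"
    and N: "open N" "x \<in> N" "C \<inter> N \<subseteq> path_image \<alpha> \<union> path_image \<gamma>"
    and tails: "\<alpha> ` {s0<..1} \<inter> C = {}" "\<gamma> ` {t0<..1} \<inter> C = {}"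
  shows "connected_component (- C) (\<alpha> 1) (\<gamma> 1)"
proof -
  obtain U h k r where U: "open U" "x \<in> U" "U \<subseteq> N" and "r > 0"
    and hom: "homeomorphism U (ball 0 r) h k" and hx: "h x = 0"
    and h\<alpha>: "h ` (path_image \<alpha> \<inter> U) = {z \<in> ball 0 r. Im z = 0}"
    and h\<gamma>: "h ` (path_image \<gamma> \<inter> U) = {z \<in> ball 0 r. Re z = 0}"
    by (rule proper_crossing_chart_within[OF pc N(1,2)])
  obtain s1 where s1: "s1 \<in> {s0<..1}" "\<alpha> s1 \<in> U" "\<alpha> s1 \<noteq> x"
    using arc_continues_in_open[OF arcs(1) s0(1) U(1)] s0(2) U(2) by metis
  obtain t1 where t1: "t1 \<in> {t0<..1}" "\<gamma> t1 \<in> U" "\<gamma> t1 \<noteq> x"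
    using arc_continues_in_open[OF arcs(2) t0(1) U(1)] t0(2) U(2) by metis
  have "\<alpha> ` {s1..1} \<subseteq> - C" "\<gamma> ` {t1..1} \<subseteq> - C"
    using tails image_mono[of "{s1..1}" "{s0<..1}" \<alpha>] image_mono[of "{t1..1}" "{t0<..1}" \<gamma>] s1(1) t1(1)
    by force+
  then have "connected_component (- C) (\<alpha> s1) (\<alpha> 1)" "connected_component (- C) (\<gamma> t1) (\<gamma> 1)"
    using s0 s1 t0 t1 by (auto intro!: connected_component_path_piece arc_imp_path arcs)
  moreover have "connected_component (- C) (\<alpha> s1) (\<gamma> t1)"
  proof (rule chart_axes_points_connected[OF hom U(2) hx h\<alpha> h\<gamma>])
    show "\<alpha> s1 \<in> path_image \<alpha> \<inter> U" "\<gamma> t1 \<in> path_image \<gamma> \<inter> U"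
      using s0 s1 t0 t1 by (auto simp: path_image_def)
    show "C \<inter> U \<subseteq> path_image \<alpha> \<union> path_image \<gamma>"
      using N(3) U(3) by blast
  qed (use s1 t1 tails in blast)+
  ultimately show ?thesis
    using connected_component_sym connected_component_trans by metis
qed

lemma arc_crossing_axis_changes_side:
  fixes \<delta> :: "real \<Rightarrow> complex"
  assumes \<delta>: "arc \<delta>" "t2 \<in> {0<..<1}"
    and hom: "homeomorphism U (ball 0 r) h k" and "open U"
    and h\<delta>: "h ` (path_image \<delta> \<inter> U) = {z \<in> ball 0 r. Re z = 0}"
    and y: "\<delta> t2 \<in> U" "h (\<delta> t2) = 0"
  obtains a b where "a \<in> {0..<t2}" "b \<in> {t2<..1}" "\<delta> a \<in> U" "\<delta> b \<in> U"
    "Im (h (\<delta> a)) * Im (h (\<delta> b)) < 0"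
proof -
  obtain e where "e > 0" and e: "\<And>t. t \<in> {0..1} \<Longrightarrow> \<bar>t - t2\<bar> < e \<Longrightarrow> \<delta> t \<in> U"
    using path_near_in_open[OF arc_imp_path[OF \<delta>(1)], of t2 U] \<delta>(2) \<open>open U\<close> y(1) by auto
  define a where "a = max (t2 - e/2) 0"
  define b where "b = min (t2 + e/2) 1"
  have ab: "a \<in> {0..<t2}" "b \<in> {t2<..1}"
    using \<open>e > 0\<close> \<delta>(2) by (auto simp: a_def b_def)
  have inU: "\<delta> t \<in> U" if "t \<in> {a..b}" for t
    using that \<open>e > 0\<close> by (intro e) (auto simp: a_def b_def)
  define f where "f t = Im (h (\<delta> t))" for t
  have "continuous_on {a..b} f"
  proof -
    have "continuous_on {a..b} \<delta>"
      using ab arc_imp_path[OF \<delta>(1)] unfolding path_def by (rule_tac continuous_on_subset) auto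
    then have "continuous_on {a..b} (h \<circ> \<delta>)"
      using inU by (intro continuous_on_compose continuous_on_subset[OF homeomorphism_cont1[OF hom]]) auto
    then show ?thesis
      unfolding f_def o_def by (intro continuous_intros)
  qed
  moreover have "inj_on f {a..b}"
  proof (rule inj_onI)
    fix t t' assume tt: "t \<in> {a..b}" "t' \<in> {a..b}" "f t = f t'"
    have "Re (h (\<delta> s)) = 0" if "s \<in> {a..b}" for s
      using inU[OF that] that ab h\<delta> by (force simp: path_image_def)
    then have "h (\<delta> t) = h (\<delta> t')"
      using tt by (simp add: f_def complex_eq_iff)
    then have "\<delta> t = \<delta> t'"
      using homeomorphism_apply1[OF hom] inU tt(1,2) by metis
    then show "t = t'"
      using arc_eq_iff[OF \<delta>(1)] tt(1,2) ab by auto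
  qed
  moreover have "t2 \<in> {a<..<b}" "f t2 = 0"
    using ab y(2) by (auto simp: f_def)
  ultimately have "f a * f b < 0"
    by (rule continuous_inj_sign_change)
  then show thesis
    using that ab inU by (auto simp: f_def)
qed

lemma proper_crossing_chart_halves:
  fixes \<beta> :: "real \<Rightarrow> complex"
  assumes hom: "homeomorphism U (ball 0 r) h k"
    and h\<beta>: "h ` (path_image \<beta> \<inter> U) = {z \<in> ball 0 r. Im z = 0}"
    and N: "U \<subseteq> N" "J \<inter> N = path_image \<beta> \<inter> N"
  obtains H1 H2 where "U - J = H1 \<union> H2" "connected H1" "connected H2"
    "\<And>z. z \<in> U \<Longrightarrow> Im (h z) > 0 \<Longrightarrow> z \<in> H1" "\<And>z. z \<in> U \<Longrightarrow> Im (h z) < 0 \<Longrightarrow> z \<in> H2"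
proof
  define H1 H2 where "H1 = k ` {w \<in> ball 0 r. Im w > 0}" and "H2 = k ` {w \<in> ball 0 r. Im w < 0}"
  have off_J: "z \<in> J \<longleftrightarrow> Im (h z) = 0" if "z \<in> U" for z
  proof
    assume "z \<in> J"
    then show "Im (h z) = 0"
      using N h\<beta> that by blast
  next
    assume "Im (h z) = 0"
    then have "h z \<in> h ` (path_image \<beta> \<inter> U)"
      using h\<beta> homeomorphism_image1[OF hom] that by blast
    then have "z \<in> path_image \<beta>"
      using homeomorphism_apply1[OF hom] that by (metis IntE imageE)
    then show "z \<in> J"
      using N that by blast
  qed
  have in_half: "z \<in> k ` {w \<in> ball 0 r. P w}" if "z \<in> U" "P (h z)" for z P
  proof (rule image_eqI)
    show "z = k (h z)"
      using homeomorphism_apply1[OF hom that(1)] by simp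
    show "h z \<in> {w \<in> ball 0 r. P w}"
      using that homeomorphism_image1[OF hom] by blast
  qed
  show "z \<in> H1" if "z \<in> U" "Im (h z) > 0" for z
    unfolding H1_def by (rule in_half[where P = "\<lambda>w. Im w > 0", OF that])
  show "z \<in> H2" if "z \<in> U" "Im (h z) < 0" for z
    unfolding H2_def by (rule in_half[where P = "\<lambda>w. Im w < 0", OF that])
  have side: "z \<in> U - J \<longleftrightarrow> (\<exists>w \<in> ball 0 r. Im w \<noteq> 0 \<and> z = k w)" for z
    using off_J homeomorphism_image1[OF hom] homeomorphism_image2[OF hom]
      homeomorphism_apply1[OF hom] homeomorphism_apply2[OF hom]
    by (smt (verit, best) Diff_iff image_eqI imageE)
  show "U - J = H1 \<union> H2"
  proof (intro set_eqI iffI)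
    fix z assume "z \<in> U - J"
    then show "z \<in> H1 \<union> H2"
      unfolding side H1_def H2_def by (auto simp: linorder_neq_iff)
  next
    fix z assume "z \<in> H1 \<union> H2"
    then show "z \<in> U - J"
      unfolding side H1_def H2_def by force
  qed
  have "connected (k ` {w \<in> ball 0 r. P w})" if "convex (Collect P)" for P
  proof -
    have "{w \<in> ball 0 r. P w} = ball 0 r \<inter> Collect P"
      by blast
    then have "convex {w \<in> ball 0 r. P w}"
      using convex_Int[OF convex_ball that] by simp
    then show ?thesis
      by (intro connected_continuous_image convex_connected
          continuous_on_subset[OF homeomorphism_cont2[OF hom]]) auto
  qed
  then show "connected H1" "connected H2"
    unfolding H1_def H2_def using convex_halfspace_Im_gt[of 0] convex_halfspace_Im_lt[of 0] by auto
qed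

lemma Jordan_curve_halves_separated:
  fixes g :: "real \<Rightarrow> complex"
  assumes loop: "simple_path g" "pathfinish g = pathstart g" "y \<in> path_image g"
    and U: "open U" "y \<in> U" "U - path_image g = H1 \<union> H2" "connected H1" "connected H2"
    and "z1 \<in> H1" "z2 \<in> H2"
  shows "\<not> connected_component (- path_image g) z1 z2"
proof
  define J where "J = path_image g"
  assume "connected_component (- path_image g) z1 z2"
  then obtain Z where Z: "connected Z" "Z \<subseteq> - J" "z1 \<in> Z" "z2 \<in> Z"
    unfolding connected_component_def J_def by blast
  have Jordan: "open (inside J)" "open (outside J)" "inside J \<inter> outside J = {}"
    "inside J \<union> outside J = - J" "y \<in> closure (inside J)" "y \<in> closure (outside J)"
    using Jordan_inside_outside[OF loop(1,2)] loop(3) by (auto simp: J_def frontier_def)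
  have meets: "X \<inter> (H1 \<union> H2) \<noteq> {}" if "X \<subseteq> - J" "y \<in> closure X" for X
  proof -
    have "U \<inter> X \<noteq> {}"
      using open_Int_closure_eq_empty[OF U(1), of X] that(2) U(2) by blast
    then show ?thesis
      using that(1) U(3) unfolding J_def by blast
  qed
  have "connected (Z \<union> H1)"
    using connected_Un[OF Z(1) U(4)] Z(3) \<open>z1 \<in> H1\<close> by blast
  then have "connected (Z \<union> H1 \<union> H2)"
    using connected_Un U(5) Z(4) \<open>z2 \<in> H2\<close> by blast
  moreover have "Z \<union> H1 \<union> H2 \<subseteq> inside J \<union> outside J"
    using Z(2) U(3) Jordan(4) unfolding J_def by blast
  ultimately have "inside J \<inter> (Z \<union> H1 \<union> H2) = {} \<or> outside J \<inter> (Z \<union> H1 \<union> H2) = {}"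
    using connectedD[OF _ Jordan(1,2)] Jordan(3) by blast
  moreover have "inside J \<inter> (H1 \<union> H2) \<noteq> {}" "outside J \<inter> (H1 \<union> H2) \<noteq> {}"
    using meets Jordan(4-6) by blast+
  ultimately show False
    by blast
qed

lemma Jordan_curve_crossed_once_separates:
  fixes g \<beta> \<delta> :: "real \<Rightarrow> complex"
  assumes loop: "simple_path g" "pathfinish g = pathstart g"
    and pc: "proper_crossing_at \<beta> \<delta> y"
    and N: "open N" "y \<in> N" "path_image g \<inter> N = path_image \<beta> \<inter> N"
    and \<delta>: "arc \<delta>" "path_image \<delta> \<inter> path_image g = {y}" "y \<notin> {pathstart \<delta>, pathfinish \<delta>}"
  shows "\<not> connected_component (- path_image g) (pathstart \<delta>) (pathfinish \<delta>)"
proof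
  \<comment> \<open>Near y the arc \<delta> passes from one half of the chart to the other, and the two halves
    lie on different sides of the curve.\<close>
  assume ends_connected: "connected_component (- path_image g) (pathstart \<delta>) (pathfinish \<delta>)"
  obtain U h k r where U: "open U" "y \<in> U" "U \<subseteq> N" and "r > 0"
    and hom: "homeomorphism U (ball 0 r) h k" and hy: "h y = 0"
    and h\<beta>: "h ` (path_image \<beta> \<inter> U) = {z \<in> ball 0 r. Im z = 0}"
    and h\<delta>: "h ` (path_image \<delta> \<inter> U) = {z \<in> ball 0 r. Re z = 0}"
    by (rule proper_crossing_chart_within[OF pc N(1,2)])
  obtain H1 H2 where H: "U - path_image g = H1 \<union> H2" "connected H1" "connected H2"
    and H1: "\<And>z. z \<in> U \<Longrightarrow> Im (h z) > 0 \<Longrightarrow> z \<in> H1"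
    and H2: "\<And>z. z \<in> U \<Longrightarrow> Im (h z) < 0 \<Longrightarrow> z \<in> H2"
    using proper_crossing_chart_halves[OF hom h\<beta> U(3) N(3)] by blast
  have "y \<in> path_image \<delta>" "y \<in> path_image g"
    using \<delta>(2) by blast+
  then obtain t2 where t2: "t2 \<in> {0<..<1}" "\<delta> t2 = y"
    using arc_interior_pointE \<delta>(3) by blast
  then obtain a b where ab: "a \<in> {0..<t2}" "b \<in> {t2<..1}" "\<delta> a \<in> U" "\<delta> b \<in> U"
    and sign: "Im (h (\<delta> a)) * Im (h (\<delta> b)) < 0"
    using arc_crossing_axis_changes_side[OF \<delta>(1) t2(1) hom U(1) h\<delta>] hy U(2) by metis
  have "\<delta> t \<notin> path_image g" if "t \<in> {0..1}" "t \<noteq> t2" for t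
  proof
    assume "\<delta> t \<in> path_image g"
    moreover have "\<delta> t \<in> path_image \<delta>"
      using that(1) by (simp add: path_image_def)
    ultimately have "\<delta> t = \<delta> t2"
      using \<delta>(2) t2(2) by blast
    then show False
      using arc_eq_iff[OF \<delta>(1)] that t2(1) by auto
  qed
  then have "\<delta> ` {0..a} \<subseteq> - path_image g" "\<delta> ` {b..1} \<subseteq> - path_image g"
    using ab by force+
  then have "connected_component (- path_image g) (\<delta> 0) (\<delta> a)"
    "connected_component (- path_image g) (\<delta> b) (\<delta> 1)"
    using ab t2(1) by (auto intro!: connected_component_path_piece arc_imp_path \<delta>(1))
  then have "connected_component (- path_image g) (\<delta> a) (\<delta> b)"
    using ends_connected connected_component_sym connected_component_trans
    unfolding pathstart_def pathfinish_def by metis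
  moreover have "\<delta> a \<in> H1 \<and> \<delta> b \<in> H2 \<or> \<delta> a \<in> H2 \<and> \<delta> b \<in> H1"
    using sign ab(3,4) H1 H2 unfolding mult_less_0_iff by blast
  ultimately show False
    using Jordan_curve_halves_separated[OF loop \<open>y \<in> path_image g\<close> U(1,2) H]
      connected_component_sym by blast
qed

section \<open>The triangle cut off by a crossing and an associated edge\<close>

(* The edges ab and cd, drawn as arcs \<alpha> and \<gamma> starting at a and c, cross at
   x = \<alpha> s0 = \<gamma> t0, and \<beta> is the edge ac. *)
locale crossing_triangle =
  fixes \<alpha> \<beta> \<gamma> :: "real \<Rightarrow> complex" and s0 t0 :: real
  assumes arcs: "arc \<alpha>" "arc \<beta>" "arc \<gamma>"
    and \<beta>_ends: "\<beta> 0 = \<alpha> 0" "\<beta> 1 = \<gamma> 0"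
    and params: "s0 \<in> {0<..<1}" "t0 \<in> {0<..<1}" "\<gamma> t0 = \<alpha> s0"
    and crossing: "proper_crossing_at \<alpha> \<gamma> (\<alpha> s0)"
    and \<alpha>_Int_\<gamma>: "path_image \<alpha> \<inter> path_image \<gamma> = {\<alpha> s0}"
    and \<alpha>_Int_\<beta>: "path_image \<alpha> \<inter> path_image \<beta> = {\<alpha> 0}"
    and \<gamma>_Int_\<beta>: "path_image \<gamma> \<inter> path_image \<beta> = {\<gamma> 0}"
begin

definition triangle :: "complex set" where
  "triangle = \<alpha> ` {0..s0} \<union> \<gamma> ` {0..t0} \<union> path_image \<beta>"

lemma triangle_subset: "triangle \<subseteq> path_image \<alpha> \<union> path_image \<gamma> \<union> path_image \<beta>"
  using params by (auto simp: triangle_def path_image_def)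

lemma initial_parts_subset: "\<alpha> ` {0..s0} \<subseteq> path_image \<alpha>" "\<gamma> ` {0..t0} \<subseteq> path_image \<gamma>"
  using params by (auto simp: path_image_def)

lemma \<alpha>_Int_triangle: "path_image \<alpha> \<inter> triangle = \<alpha> ` {0..s0}"
proof
  show "\<alpha> ` {0..s0} \<subseteq> path_image \<alpha> \<inter> triangle"
    using initial_parts_subset(1) by (auto simp: triangle_def)
  show "path_image \<alpha> \<inter> triangle \<subseteq> \<alpha> ` {0..s0}"
  proof
    fix z assume "z \<in> path_image \<alpha> \<inter> triangle"
    then consider "z \<in> \<alpha> ` {0..s0}" | "z \<in> path_image \<alpha> \<inter> path_image \<gamma>"
      | "z \<in> path_image \<alpha> \<inter> path_image \<beta>"
      using initial_parts_subset(2) unfolding triangle_def by blast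
    then show "z \<in> \<alpha> ` {0..s0}"
      using \<alpha>_Int_\<gamma> \<alpha>_Int_\<beta> params(1) by cases auto
  qed
qed

lemma \<gamma>_Int_triangle: "path_image \<gamma> \<inter> triangle = \<gamma> ` {0..t0}"
proof
  show "\<gamma> ` {0..t0} \<subseteq> path_image \<gamma> \<inter> triangle"
    using initial_parts_subset(2) by (auto simp: triangle_def)
  show "path_image \<gamma> \<inter> triangle \<subseteq> \<gamma> ` {0..t0}"
  proof
    fix z assume "z \<in> path_image \<gamma> \<inter> triangle"
    then consider "z \<in> \<gamma> ` {0..t0}" | "z \<in> path_image \<alpha> \<inter> path_image \<gamma>"
      | "z \<in> path_image \<gamma> \<inter> path_image \<beta>"
      using initial_parts_subset(1) unfolding triangle_def by blast
    then show "z \<in> \<gamma> ` {0..t0}"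
      using \<alpha>_Int_\<gamma> \<gamma>_Int_\<beta> params(2) by cases (auto simp flip: params(3))
  qed
qed

lemma final_parts_outside_triangle: "\<alpha> ` {s0<..1} \<inter> triangle = {}" "\<gamma> ` {t0<..1} \<inter> triangle = {}"
proof -
  have "\<alpha> ` {s0<..1} \<inter> \<alpha> ` {0..s0} = \<alpha> ` ({s0<..1} \<inter> {0..s0})"
    by (rule inj_on_image_Int[OF arc_imp_inj_on[OF arcs(1)], symmetric]) (use params in auto)
  then have "\<alpha> ` {s0<..1} \<inter> \<alpha> ` {0..s0} = {}"
    by auto
  moreover have "\<alpha> ` {s0<..1} \<subseteq> path_image \<alpha>"
    using params by (auto simp: path_image_def)
  ultimately show "\<alpha> ` {s0<..1} \<inter> triangle = {}"
    using \<alpha>_Int_triangle by blast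
  have "\<gamma> ` {t0<..1} \<inter> \<gamma> ` {0..t0} = \<gamma> ` ({t0<..1} \<inter> {0..t0})"
    by (rule inj_on_image_Int[OF arc_imp_inj_on[OF arcs(3)], symmetric]) (use params in auto)
  then have "\<gamma> ` {t0<..1} \<inter> \<gamma> ` {0..t0} = {}"
    by auto
  moreover have "\<gamma> ` {t0<..1} \<subseteq> path_image \<gamma>"
    using params by (auto simp: path_image_def)
  ultimately show "\<gamma> ` {t0<..1} \<inter> triangle = {}"
    using \<gamma>_Int_triangle by blast
qed

lemma far_ends_outside_triangle: "\<alpha> 1 \<notin> triangle" "\<gamma> 1 \<notin> triangle"
proof -
  have "\<alpha> 1 \<in> \<alpha> ` {s0<..1}" "\<gamma> 1 \<in> \<gamma> ` {t0<..1}"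
    using params by auto
  then show "\<alpha> 1 \<notin> triangle" "\<gamma> 1 \<notin> triangle"
    using final_parts_outside_triangle by blast+
qed

lemma triangle_Jordan_curve:
  obtains g where "simple_path g" "pathfinish g = pathstart g" "path_image g = triangle"
proof
  define p1 p2 p3 where "p1 = subpath 0 s0 \<alpha>" and "p2 = subpath t0 0 \<gamma>" and "p3 = reversepath \<beta>"
  have images: "path_image p1 = \<alpha> ` {0..s0}" "path_image p2 = \<gamma> ` {0..t0}" "path_image p3 = path_image \<beta>"
    using params by (simp_all add: p1_def p2_def p3_def path_image_subpath)
  have ends: "pathstart p1 = \<alpha> 0" "pathfinish p1 = \<alpha> s0" "pathstart p2 = \<alpha> s0" "pathfinish p2 = \<gamma> 0"
    "pathstart p3 = \<gamma> 0" "pathfinish p3 = \<alpha> 0"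
    using params(3) \<beta>_ends
    by (simp_all add: p1_def p2_def p3_def pathstart_def pathfinish_def subpath_def reversepath_def)
  show "simple_path (p1 +++ p2 +++ p3)"
  proof (rule simple_path_join3I)
    show "arc p1" "arc p2" "arc p3"
      using params arcs by (auto simp: p1_def p2_def p3_def intro: arc_subpath_arc arc_reversepath)
    have "path_image p1 \<inter> path_image p2 \<subseteq> path_image \<alpha> \<inter> path_image \<gamma>"
      unfolding images by (rule Int_mono[OF initial_parts_subset])
    then show "path_image p1 \<inter> path_image p2 \<subseteq> {pathstart p2}"
      using \<alpha>_Int_\<gamma> ends by simp
    have "path_image p2 \<inter> path_image p3 \<subseteq> path_image \<gamma> \<inter> path_image \<beta>"
      unfolding images by (rule Int_mono[OF initial_parts_subset(2) order_refl])
    then show "path_image p2 \<inter> path_image p3 \<subseteq> {pathstart p3}"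
      using \<gamma>_Int_\<beta> ends by simp
    have "path_image p1 \<inter> path_image p3 \<subseteq> path_image \<alpha> \<inter> path_image \<beta>"
      unfolding images by (rule Int_mono[OF initial_parts_subset(1) order_refl])
    then show "path_image p1 \<inter> path_image p3 \<subseteq> {pathstart p1} \<inter> {pathfinish p3}"
      using \<alpha>_Int_\<beta> ends by simp
  qed (use ends in simp_all)
  show "pathfinish (p1 +++ p2 +++ p3) = pathstart (p1 +++ p2 +++ p3)"
    using ends by simp
  show "path_image (p1 +++ p2 +++ p3) = triangle"
    using images ends by (simp add: triangle_def path_image_join Un_assoc)
qed

lemma tails_connected: "connected_component (- triangle) (\<alpha> 1) (\<gamma> 1)"
proof (rule proper_crossing_tails_connected[OF arcs(1,3) crossing])
  show "open (- path_image \<beta>)"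
    using closed_path_image[OF arc_imp_path[OF arcs(2)]] by (simp add: open_Compl)
  have "\<alpha> s0 \<noteq> \<alpha> 0"
    using arc_eq_iff[OF arcs(1), of s0 0] params by auto
  moreover have "\<alpha> s0 \<in> path_image \<alpha>"
    using params by (auto simp: path_image_def)
  ultimately show "\<alpha> s0 \<in> - path_image \<beta>"
    using \<alpha>_Int_\<beta> by blast
  show "triangle \<inter> - path_image \<beta> \<subseteq> path_image \<alpha> \<union> path_image \<gamma>"
    using triangle_subset by blast
qed (use params final_parts_outside_triangle in auto)

lemma crossing_arc_separates:
  assumes \<delta>: "arc \<delta>" "proper_crossing_at \<beta> \<delta> y" "path_image \<delta> \<inter> triangle = {y}"
    "y \<notin> {pathstart \<delta>, pathfinish \<delta>}"
    and y: "y \<in> path_image \<beta>" "y \<notin> {\<beta> 0, \<beta> 1}"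
  shows "\<not> connected_component (- triangle) (pathstart \<delta>) (pathfinish \<delta>)"
proof -
  define K where "K = \<alpha> ` {0..s0} \<union> \<gamma> ` {0..t0}"
  have "continuous_on {0..1} \<alpha>" "continuous_on {0..1} \<gamma>"
    using arcs(1,3) by (auto dest: arc_imp_path simp: path_def)
  then have "compact (\<alpha> ` {0..s0})" "compact (\<gamma> ` {0..t0})"
    using params by (metis atLeastatMost_subset_iff compact_Icc compact_continuous_image
        continuous_on_subset greaterThanLessThan_iff order_refl less_imp_le)+
  then have "compact K"
    unfolding K_def by (rule compact_Un)
  then have "open (- K)"
    by (simp add: compact_imp_closed open_Compl)
  have "K \<inter> path_image \<beta> \<subseteq> path_image \<alpha> \<inter> path_image \<beta> \<union> path_image \<gamma> \<inter> path_image \<beta>"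
    using initial_parts_subset unfolding K_def by blast
  then have "y \<in> - K"
    using y \<alpha>_Int_\<beta> \<gamma>_Int_\<beta> \<beta>_ends by auto
  obtain g where g: "simple_path g" "pathfinish g = pathstart g" "path_image g = triangle"
    by (rule triangle_Jordan_curve)
  have "path_image g \<inter> - K = path_image \<beta> \<inter> - K"
    unfolding g(3) triangle_def K_def by blast
  then have "\<not> connected_component (- path_image g) (pathstart \<delta>) (pathfinish \<delta>)"
    by (rule Jordan_curve_crossed_once_separates[OF g(1,2) \<delta>(2) \<open>open (- K)\<close> \<open>y \<in> - K\<close> _ \<delta>(1) _ \<delta>(4)])
      (use \<delta>(3) g(3) in simp)
  then show ?thesis
    using g(3) by simp
qed

end

section \<open>One-planar drawings\<close>

lemma crossings_commute: "crossings V pos curve e f = crossings V pos curve f e"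
  unfolding crossings_def by blast

lemma cross_commute: "cross V pos curve e f \<longleftrightarrow> cross V pos curve f e"
  unfolding cross_def crossings_commute[of V pos curve e f] by blast

locale one_planar_graph =
  fixes V :: "'a set" and E :: "'a set set"
    and pos :: "'a \<Rightarrow> complex" and curve :: "'a set \<Rightarrow> real \<Rightarrow> complex"
  assumes graph: "simple_graph V E" and one_planar: "one_planar_drawing V E pos curve"
begin

abbreviation crosses :: "'a set \<Rightarrow> 'a set \<Rightarrow> bool" where
  "crosses \<equiv> cross V pos curve"

lemma is_good_drawing: "good_drawing V E pos curve"
  using one_planar unfolding one_planar_drawing_def by blast

lemma is_drawing: "drawing V E pos curve"
  using is_good_drawing unfolding good_drawing_def by blast

lemma edgeE:
  assumes "e \<in> E"
  obtains u v where "e = {u, v}" "u \<noteq> v" "u \<in> V" "v \<in> V"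
  using assms graph unfolding simple_graph_def by blast

lemma edge_subset: "e \<in> E \<Longrightarrow> e \<subseteq> V"
  by (elim edgeE) auto

lemma edge_subset_eq: "e \<in> E \<Longrightarrow> f \<in> E \<Longrightarrow> e \<subseteq> f \<Longrightarrow> e = f"
  by (elim edgeE) (auto simp: doubleton_eq_iff)

lemma finite_edges: "finite E"
proof (rule finite_subset)
  show "E \<subseteq> Pow V"
    using edge_subset by blast
  show "finite (Pow V)"
    using graph by (simp add: simple_graph_def)
qed

lemma inj_pos: "inj_on pos V"
  using is_drawing unfolding drawing_def by blast

lemma edge_arc: "e \<in> E \<Longrightarrow> arc (curve e)"
  using is_drawing unfolding drawing_def by blast

lemma edge_ends: "e \<in> E \<Longrightarrow> {pathstart (curve e), pathfinish (curve e)} = pos ` e"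
  using is_drawing unfolding drawing_def by blast

lemma ends_on_edge: "e \<in> E \<Longrightarrow> pos ` e \<subseteq> path_image (curve e)"
  using edge_ends[of e, symmetric] by (simp add: pathstart_in_path_image pathfinish_in_path_image)

lemma vertices_on_edge: "e \<in> E \<Longrightarrow> path_image (curve e) \<inter> pos ` V \<subseteq> pos ` e"
  using is_drawing unfolding drawing_def by blast

lemma edge_images_Int:
  assumes "e \<in> E" "f \<in> E"
  shows "path_image (curve e) \<inter> path_image (curve f) = pos ` (e \<inter> f) \<union> crossings V pos curve e f"
proof (intro equalityI subsetI)
  fix z assume z: "z \<in> path_image (curve e) \<inter> path_image (curve f)"
  show "z \<in> pos ` (e \<inter> f) \<union> crossings V pos curve e f"
  proof (cases "z \<in> pos ` V")
    case True
    then have "z \<in> pos ` e \<inter> pos ` f"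
      using z vertices_on_edge[OF assms(1)] vertices_on_edge[OF assms(2)] by blast
    then show ?thesis
      using inj_on_image_Int[OF inj_pos edge_subset edge_subset] assms by blast
  next
    case False
    then show ?thesis
      using z unfolding crossings_def by blast
  qed
next
  fix z assume "z \<in> pos ` (e \<inter> f) \<union> crossings V pos curve e f"
  then show "z \<in> path_image (curve e) \<inter> path_image (curve f)"
    using ends_on_edge[OF assms(1)] ends_on_edge[OF assms(2)] unfolding crossings_def by blast
qed

lemma crosses_disjoint: "e \<in> E \<Longrightarrow> f \<in> E \<Longrightarrow> crosses e f \<Longrightarrow> e \<inter> f = {}"
  using is_good_drawing unfolding good_drawing_def cross_def by blast

lemma adjacent_edge_images_Int:
  assumes "{u, v} \<in> E" "{u, w} \<in> E" "v \<noteq> w"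
  shows "path_image (curve {u, v}) \<inter> path_image (curve {u, w}) = {pos u}"
proof -
  have "u \<noteq> v" "u \<noteq> w"
    using assms(1,2) by (auto elim!: edgeE simp: doubleton_eq_iff)
  then have common: "{u, v} \<inter> {u, w} = {u}" and "{u, v} \<noteq> {u, w}"
    using assms(3) by (auto simp: doubleton_eq_iff)
  then have "crossings V pos curve {u, v} {u, w} = {}"
    using crosses_disjoint[OF assms(1,2)] unfolding cross_def by blast
  then show ?thesis
    using edge_images_Int[OF assms(1,2)] unfolding common by simp
qed

lemma crossings_singletonE:
  assumes "e \<in> E" "f \<in> E" "crosses e f"
  obtains x where "crossings V pos curve e f = {x}"
proof -
  have "e \<noteq> f" "crossings V pos curve e f \<noteq> {}"
    using assms(3) unfolding cross_def by blast+
  moreover have "finite (crossings V pos curve e f)" "card (crossings V pos curve e f) \<le> 1"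
    using is_good_drawing assms(1,2) \<open>e \<noteq> f\<close> unfolding good_drawing_def by blast+
  ultimately have "card (crossings V pos curve e f) = 1"
    by (simp add: le_Suc_eq card_eq_0_iff)
  then show thesis
    using that card_1_singletonE by blast
qed

lemma crossing_proper:
  "e \<in> E \<Longrightarrow> f \<in> E \<Longrightarrow> x \<in> crossings V pos curve e f \<Longrightarrow> crosses e f \<Longrightarrow>
    proper_crossing_at (curve e) (curve f) x"
  using is_drawing unfolding drawing_def cross_def by blast

lemma crossing_partner_unique:
  assumes "e \<in> E" "f \<in> E" "f' \<in> E" "crosses e f" "crosses e f'"
  shows "f = f'"
proof -
  have "card {g \<in> E. crosses e g} \<le> 1"
    using one_planar assms(1) unfolding one_planar_drawing_def by blast
  moreover have "finite {g \<in> E. crosses e g}"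
    using finite_edges by simp
  ultimately have "\<forall>g \<in> {g \<in> E. crosses e g}. \<forall>g' \<in> {g \<in> E. crosses e g}. g = g'"
    using card_le_Suc0_iff_eq by (metis One_nat_def)
  then show ?thesis
    using assms(2-5) by blast
qed

lemma associated_edgeE:
  assumes "e \<in> E" "f \<in> E" "g \<in> E" "g \<subseteq> e \<union> f" "g \<noteq> e" "g \<noteq> f"
  obtains a b c d where "e = {a, b}" "f = {c, d}" "g = {a, c}"
proof -
  obtain p p' where g: "g = {p, p'}"
    by (rule edgeE[OF assms(3)])
  have "\<not> g \<subseteq> e" "\<not> g \<subseteq> f"
    using edge_subset_eq assms by blast+
  then consider "p \<in> e" "p' \<in> f" | "p' \<in> e" "p \<in> f"
    using assms(4) g by blast
  then obtain a c where "a \<in> e" "c \<in> f" "g = {a, c}"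
    using g by (metis insert_commute)
  moreover have "\<exists>y. x = {u, y}" if "x \<in> E" "u \<in> x" for x u
    using that by (auto elim!: edgeE simp: insert_commute)
  ultimately show thesis
    using that assms(1,2) by metis
qed

lemma oriented_edge_arc:
  assumes "{u, v} \<in> E"
  obtains p where "arc p" "path_image p = path_image (curve {u, v})" "p 0 = pos u" "p 1 = pos v"
proof -
  have "u \<noteq> v" "u \<in> V" "v \<in> V"
    using assms by (auto elim!: edgeE simp: doubleton_eq_iff)
  then have "pos u \<noteq> pos v"
    using inj_pos by (auto dest: inj_onD)
  moreover have ends: "{pathstart (curve {u, v}), pathfinish (curve {u, v})} = {pos u, pos v}"
    using edge_ends[OF assms] by simp
  ultimately consider "pathstart (curve {u, v}) = pos u" "pathfinish (curve {u, v}) = pos v"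
    | "pathstart (curve {u, v}) = pos v" "pathfinish (curve {u, v}) = pos u"
    by (auto simp: doubleton_eq_iff)
  then show thesis
  proof cases
    case 1
    then show thesis
      using that[of "curve {u, v}"] edge_arc[OF assms] by (simp add: pathstart_def pathfinish_def)
  next
    case 2
    then have "reversepath (curve {u, v}) 0 = pos u" "reversepath (curve {u, v}) 1 = pos v"
      by (simp_all add: pathstart_def pathfinish_def reversepath_def)
    then show thesis
      using that[of "reversepath (curve {u, v})"] arc_reversepath[OF edge_arc[OF assms]] by simp
  qed
qed

lemma connected_subgraph_drawn_connected:
  assumes "connected_on W E" "u \<in> W" "v \<in> W" "pos ` W \<subseteq> A"
    and edges_in: "\<And>e. e \<in> E \<Longrightarrow> e \<subseteq> W \<Longrightarrow> path_image (curve e) \<subseteq> A"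
  shows "connected_component A (pos u) (pos v)"
proof -
  have "(u, v) \<in> {(x, y). x \<in> W \<and> y \<in> W \<and> {x, y} \<in> E}\<^sup>*"
    using assms(1-3) unfolding connected_on_def by blast
  then show ?thesis
  proof (induction rule: rtrancl_induct)
    case base
    then show ?case
      using assms(2,4) by (auto intro: connected_component_refl)
  next
    case (step x y)
    then have "{x, y} \<in> E" "{x, y} \<subseteq> W"
      by auto
    then have "connected_component A (pos x) (pos y)"
      using edges_in ends_on_edge[of "{x, y}"]
      by (intro connected_componentI[OF connected_path_image[OF arc_imp_path[OF edge_arc]]]) auto
    then show ?case
      using step.IH connected_component_trans by blast
  qed
qed

end

locale drawn_crossing_triangle =
  one_planar_graph V E pos curve + crossing_triangle \<alpha> \<beta> \<gamma> s0 t0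
  for V :: "'a set" and E pos curve \<alpha> \<beta> \<gamma> s0 t0 +
  fixes a b c d :: 'a
  assumes edges: "{a, b} \<in> E" "{c, d} \<in> E" "{a, c} \<in> E"
    and ab_crosses_cd: "cross V pos curve {a, b} {c, d}"
    and images: "path_image \<alpha> = path_image (curve {a, b})" "path_image \<gamma> = path_image (curve {c, d})"
      "path_image \<beta> = path_image (curve {a, c})"
    and ends: "\<alpha> 0 = pos a" "\<alpha> 1 = pos b" "\<gamma> 0 = pos c" "\<gamma> 1 = pos d"
begin

lemma vertices_distinct: "a \<noteq> b" "c \<noteq> d" "a \<noteq> c" "a \<noteq> d" "b \<noteq> c" "b \<noteq> d"
  using crosses_disjoint[OF edges(1,2) ab_crosses_cd] edges(1,2)
  by (auto elim!: edgeE simp: doubleton_eq_iff)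

lemma vertices_in: "a \<in> V" "b \<in> V" "c \<in> V" "d \<in> V"
  using edge_subset edges by auto

lemma triangle_vertices: "triangle \<inter> pos ` V \<subseteq> {pos a, pos c}"
proof
  fix z assume z: "z \<in> triangle \<inter> pos ` V"
  then consider "z \<in> path_image (curve {a, b}) \<inter> pos ` V" | "z \<in> path_image (curve {c, d}) \<inter> pos ` V"
    | "z \<in> path_image (curve {a, c}) \<inter> pos ` V"
    using triangle_subset images by blast
  then have "z \<in> {pos a, pos b, pos c, pos d}"
    using vertices_on_edge edges by cases auto
  moreover have "z \<noteq> pos b" "z \<noteq> pos d"
    using z far_ends_outside_triangle ends by auto
  ultimately show "z \<in> {pos a, pos c}"
    by blast
qed

lemma triangle_meets_edge_in_crossing:
  assumes "e \<in> E" "a \<notin> e" "c \<notin> e" "z \<in> path_image (curve e) \<inter> triangle"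
  shows "z \<in> crossings V pos curve {a, c} e"
proof -
  have "z \<notin> pos ` V"
  proof
    assume "z \<in> pos ` V"
    then have "z \<in> pos ` e" "z \<in> {pos a, pos c}"
      using assms(4) vertices_on_edge[OF assms(1)] triangle_vertices by blast+
    then show False
      using assms(2,3) edge_subset[OF assms(1)] vertices_in inj_pos by (auto dest: inj_onD)
  qed
  then have crossing: "z \<in> crossings V pos curve e f" if "f \<in> E" "z \<in> path_image (curve f)" for f
    using assms(4) that unfolding crossings_def by blast
  have "e \<noteq> {a, b}" "e \<noteq> {c, d}" "e \<noteq> {a, c}"
    using assms(2,3) by auto
  consider "z \<in> path_image (curve {a, b})" | "z \<in> path_image (curve {c, d})" | "z \<in> path_image (curve {a, c})"
    using assms(4) triangle_subset images by blast
  then show ?thesis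
  proof cases
    case 1
    then have "z \<in> crossings V pos curve {a, b} e"
      using crossing[OF edges(1)] crossings_commute by metis
    then have "crosses {a, b} e"
      using \<open>e \<noteq> {a, b}\<close> unfolding cross_def by blast
    then show ?thesis
      using crossing_partner_unique[OF edges(1) assms(1) edges(2) _ ab_crosses_cd] assms(3) by auto
  next
    case 2
    then have "z \<in> crossings V pos curve {c, d} e"
      using crossing[OF edges(2)] crossings_commute by metis
    then have "crosses {c, d} e"
      using \<open>e \<noteq> {c, d}\<close> unfolding cross_def by blast
    moreover have "crosses {c, d} {a, b}"
      using ab_crosses_cd cross_commute by blast
    ultimately show ?thesis
      using crossing_partner_unique[OF edges(2) assms(1) edges(1)] assms(2) by auto
  next
    case 3
    then show ?thesis
      using crossing[OF edges(3)] crossings_commute by metis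
  qed
qed

lemma crossing_edge_separated:
  assumes q: "{u, v} \<in> E" "crosses {a, c} {u, v}"
  shows "\<not> connected_component (- triangle) (pos u) (pos v)"
proof -
  obtain y where y: "crossings V pos curve {a, c} {u, v} = {y}"
    using crossings_singletonE[OF edges(3) q(1,2)] by blast
  have uv: "a \<notin> {u, v}" "c \<notin> {u, v}"
    using crosses_disjoint[OF edges(3) q] by auto
  have "proper_crossing_at \<beta> (curve {u, v}) y"
    using crossing_proper[OF edges(3) q(1) _ q(2)] y images(3) proper_crossing_at_cong by blast
  moreover have "path_image (curve {u, v}) \<inter> triangle = {y}"
  proof
    show "path_image (curve {u, v}) \<inter> triangle \<subseteq> {y}"
      using triangle_meets_edge_in_crossing[OF q(1) uv] y by blast
    show "{y} \<subseteq> path_image (curve {u, v}) \<inter> triangle"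
      using y images(3) unfolding crossings_def triangle_def by blast
  qed
  moreover have "y \<notin> pos ` V"
    using y unfolding crossings_def by blast
  then have "y \<notin> {pathstart (curve {u, v}), pathfinish (curve {u, v})}" "y \<notin> {\<beta> 0, \<beta> 1}"
    using edge_ends[OF q(1)] edge_subset[OF q(1)] \<beta>_ends ends vertices_in by auto
  moreover have "y \<in> path_image \<beta>"
    using y images(3) unfolding crossings_def by blast
  ultimately have "\<not> connected_component (- triangle) (pathstart (curve {u, v})) (pathfinish (curve {u, v}))"
    using crossing_arc_separates[OF edge_arc[OF q(1)]] by blast
  then show ?thesis
    using edge_ends[OF q(1)] connected_component_sym by (fastforce simp: doubleton_eq_iff)
qed

lemma crossing_edge_far_endpoint:
  assumes "q \<in> E" "crosses {a, c} q"
  obtains w w' where "q = {w, w'}" "w \<noteq> w'" "w' \<in> V"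
    "\<not> connected_component (- triangle) (pos b) (pos w)"
    "\<not> connected_component (- triangle) (pos d) (pos w)"
proof -
  have bd: "connected_component (- triangle) (pos b) (pos d)"
    using tails_connected ends by simp
  obtain u v where uv: "q = {u, v}" "u \<noteq> v" "u \<in> V" "v \<in> V"
    by (rule edgeE[OF assms(1)])
  then have "\<not> connected_component (- triangle) (pos u) (pos v)"
    using crossing_edge_separated assms by blast
  then have "\<not> connected_component (- triangle) (pos b) (pos u) \<or>
      \<not> connected_component (- triangle) (pos b) (pos v)"
    using connected_component_sym connected_component_trans by metis
  then obtain w w' where "q = {w, w'}" "w \<noteq> w'" "w' \<in> V"
    "\<not> connected_component (- triangle) (pos b) (pos w)"
    using uv by (metis insert_commute)
  moreover have "\<not> connected_component (- triangle) (pos d) (pos w)"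
    using calculation(4) bd connected_component_trans by blast
  ultimately show thesis
    by (rule that)
qed

lemma ac_uncrossed:
  assumes "k_connected 4 V E" "q \<in> E"
  shows "\<not> crosses {a, c} q"
proof
  assume crossed: "crosses {a, c} q"
  then obtain w w' where q: "q = {w, w'}" "w \<noteq> w'" "w' \<in> V"
    and sep: "\<not> connected_component (- triangle) (pos b) (pos w)"
      "\<not> connected_component (- triangle) (pos d) (pos w)"
    using crossing_edge_far_endpoint[OF assms(2)] by blast
  obtain z where z: "z \<in> {b, d}" "z \<noteq> w'"
    using vertices_distinct by blast
  have "\<not> connected_component (- triangle) (pos z) (pos w)"
    using z sep by blast
  moreover have "connected_component (- triangle) (pos z) (pos w)"
  proof (rule connected_subgraph_drawn_connected)
    let ?S = "{a, c, w'}"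
    show "connected_on (V - ?S) E"
      using assms(1) q vertices_in unfolding k_connected_def by (auto simp: card_insert_if)
    show "z \<in> V - ?S" "w \<in> V - ?S"
      using z q vertices_in vertices_distinct crosses_disjoint[OF edges(3) assms(2) crossed]
        edge_subset[OF assms(2)] by auto
    show "pos ` (V - ?S) \<subseteq> - triangle"
      using triangle_vertices vertices_in inj_pos by (auto dest: inj_onD)
    show "path_image (curve e) \<subseteq> - triangle" if "e \<in> E" "e \<subseteq> V - ?S" for e
    proof -
      have "e \<noteq> q"
        using that q by auto
      then have "\<not> crosses {a, c} e"
        using crossing_partner_unique[OF edges(3) that(1) assms(2) _ crossed] by blast
      then show ?thesis
        using triangle_meets_edge_in_crossing[OF that(1)] that(2) unfolding cross_def by blast
    qed
  qed
  ultimately show False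
    by blast
qed

end

context one_planar_graph
begin

lemma drawn_crossing_triangle_exists:
  assumes edges: "{a, b} \<in> E" "{c, d} \<in> E" "{a, c} \<in> E" and cr: "crosses {a, b} {c, d}"
  obtains \<alpha> \<beta> \<gamma> s0 t0 where "drawn_crossing_triangle V E pos curve \<alpha> \<beta> \<gamma> s0 t0 a b c d"
proof -
  obtain \<alpha> where \<alpha>: "arc \<alpha>" "path_image \<alpha> = path_image (curve {a, b})" "\<alpha> 0 = pos a" "\<alpha> 1 = pos b"
    by (rule oriented_edge_arc[OF edges(1)])
  obtain \<gamma> where \<gamma>: "arc \<gamma>" "path_image \<gamma> = path_image (curve {c, d})" "\<gamma> 0 = pos c" "\<gamma> 1 = pos d"
    by (rule oriented_edge_arc[OF edges(2)])
  obtain \<beta> where \<beta>: "arc \<beta>" "path_image \<beta> = path_image (curve {a, c})" "\<beta> 0 = pos a" "\<beta> 1 = pos c"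
    by (rule oriented_edge_arc[OF edges(3)])
  obtain x where x: "crossings V pos curve {a, b} {c, d} = {x}"
    by (rule crossings_singletonE[OF edges(1,2) cr])
  have disjoint: "{a, b} \<inter> {c, d} = {}"
    by (rule crosses_disjoint[OF edges(1,2) cr])
  have "a \<in> V" "b \<in> V" "c \<in> V" "d \<in> V"
    using edges(1,2) edge_subset by auto
  have x_inner: "x \<in> path_image \<alpha>" "x \<in> path_image \<gamma>" "x \<notin> pos ` V"
    using x \<alpha>(2) \<gamma>(2) unfolding crossings_def by blast+
  obtain s0 where s0: "s0 \<in> {0<..<1}" "\<alpha> s0 = x"
    using arc_interior_pointE[OF x_inner(1)] x_inner(3) \<alpha>(3,4) \<open>a \<in> V\<close> \<open>b \<in> V\<close>
    by (metis image_eqI pathfinish_def pathstart_def)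
  obtain t0 where t0: "t0 \<in> {0<..<1}" "\<gamma> t0 = x"
    using arc_interior_pointE[OF x_inner(2)] x_inner(3) \<gamma>(3,4) \<open>c \<in> V\<close> \<open>d \<in> V\<close>
    by (metis image_eqI pathfinish_def pathstart_def)
  have "path_image \<alpha> \<inter> path_image \<gamma> = {x}"
    using edge_images_Int[OF edges(1,2)] x disjoint \<alpha>(2) \<gamma>(2) by simp
  moreover have "path_image \<alpha> \<inter> path_image \<beta> = {\<alpha> 0}"
    using adjacent_edge_images_Int[OF edges(1,3)] disjoint \<alpha>(2,3) \<beta>(2) by auto
  moreover have "path_image \<gamma> \<inter> path_image \<beta> = {\<gamma> 0}"
    using adjacent_edge_images_Int[of c d a] edges(2,3) disjoint \<gamma>(2,3) \<beta>(2) by (auto simp: insert_commute)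
  moreover have "proper_crossing_at \<alpha> \<gamma> x"
    using crossing_proper[OF edges(1,2) _ cr] x \<alpha>(2) \<gamma>(2) proper_crossing_at_cong by blast
  ultimately have "crossing_triangle \<alpha> \<beta> \<gamma> s0 t0"
    using \<alpha>(1,3) \<beta>(1,3,4) \<gamma>(1,3) s0 t0 by unfold_locales simp_all
  then have "drawn_crossing_triangle V E pos curve \<alpha> \<beta> \<gamma> s0 t0 a b c d"
    using \<alpha> \<beta> \<gamma> edges cr
    by (intro drawn_crossing_triangle.intro drawn_crossing_triangle_axioms.intro one_planar_graph_axioms) simp_all
  then show thesis
    by (rule that)
qed

lemma associated_edge_uncrossed:
  assumes "k_connected 4 V E" "{a, b} \<in> E" "{c, d} \<in> E" "{a, c} \<in> E" "crosses {a, b} {c, d}" "q \<in> E"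
  shows "\<not> crosses {a, c} q"
proof -
  obtain \<alpha> \<beta> \<gamma> s0 t0 where "drawn_crossing_triangle V E pos curve \<alpha> \<beta> \<gamma> s0 t0 a b c d"
    using drawn_crossing_triangle_exists assms(2-5) by blast
  then show ?thesis
    by (rule drawn_crossing_triangle.ac_uncrossed[OF _ assms(1,6)])
qed

end

theorem lemma4:
  fixes V :: "'a set" and E :: "'a set set"
    and pos :: "'a \<Rightarrow> complex" and curve :: "'a set \<Rightarrow> real \<Rightarrow> complex"
  assumes "simple_graph V E"
    and "one_planar_drawing V E pos curve"
    and "k_connected 4 V E"
  shows "nice_drawing V E pos curve"
proof -
  interpret one_planar_graph V E pos curve
    using assms(1,2) by unfold_locales
  show ?thesis
    unfolding nice_drawing_def
  proof (intro conjI assms(2) ballI impI allI notI)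
    fix e f g h
    assume e: "e \<in> E" "f \<in> E" "crosses e f" and g: "g \<in> E" "g \<subseteq> e \<union> f \<and> g \<noteq> e \<and> g \<noteq> f"
      and h: "h \<in> E" "crosses g h"
    obtain a b c d where "e = {a, b}" "f = {c, d}" "g = {a, c}"
      using associated_edgeE[OF e(1,2) g(1)] g(2) by blast
    then show False
      using associated_edge_uncrossed[OF assms(3)] e g(1) h by blast
  qed
qed

end
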